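(* Let $H$ be a connected graph of order $a \in \mathbb{N}$. Then for every integer $b \ge 2$, $R_\mathrm{cyc}(H, C_b^\mathrm{mon}) \ge 1 + (a-1)(b-1)$.
   Context: All graphs are finite, simple and undirected, and a graph of order $n$ has vertex set $\{0,1,\ldots,n-1\}$; $K_n$ is the complete graph on $\{0,\ldots,n-1\}$. A $2$-edge-coloring of $K_n$ assigns each edge a color in $\{1,2\}$. For a graph $H$ and such a coloring, an embedding of $H$ in color $j$ is an injective map $\varphi\colon V(H)\to V(K_n)$ such that for every edge $uv$ of $H$ the edge $\{\varphi(u),\varphi(v)\}$ has color $j$; it is increasing up to a cyclic permutation if there exists $t\in V(H)$ such that $(\varphi(t),\ldots,\varphi(|H|-1),\varphi(0),\ldots,\varphi(t-1))$ is increasing. The cyclic Ramsey number $R_\mathrm{cyc}(H_1,H_2)$ is the smallest $n$ such that every $2$-edge-coloring of $K_n$ admits an embedding of $H_1$ in color $1$ or of $H_2$ in color $2$ that is increasing up to a cyclic permutation. For $n\ge 3$, the monotone cycle $C_n^\mathrm{mon}$ is the graph of order $n$ with edges $\{i,i+1\}$ for $0\le i\le n-2$ together with $\{0,n-1\}$; by convention $C_2^\mathrm{mon}=K_2$. *)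

theory Defs
  imports Main "HOL-Library.Extended_Nat"
begin

text \<open>A graph of order n has vertex set {0..<n}; it is given as a pair (n, E)
  where E is a set of 2-element subsets of {0..<n}.\<close>
type_synonym graph = "nat \<times> nat set set"

definition graph_order :: "graph \<Rightarrow> nat" where
  "graph_order G = fst G"

definition graph_edges :: "graph \<Rightarrow> nat set set" where
  "graph_edges G = snd G"

definition wf_graph :: "graph \<Rightarrow> bool" where
  "wf_graph G \<longleftrightarrow> (\<forall>e\<in>graph_edges G. \<exists>u v. e = {u, v} \<and> u \<noteq> v \<and> u < graph_order G \<and> v < graph_order G)"

definition connected_graph :: "graph \<Rightarrow> bool" where
  "connected_graph G \<longleftrightarrow> wf_graph G \<and>
     (\<forall>u < graph_order G. \<forall>v < graph_order G. (\<lambda>x y. {x, y} \<in> graph_edges G)\<^sup>*\<^sup>* u v)"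

definition two_coloring :: "nat \<Rightarrow> (nat set \<Rightarrow> nat) \<Rightarrow> bool" where
  "two_coloring n c \<longleftrightarrow> (\<forall>u v. u < n \<longrightarrow> v < n \<longrightarrow> u \<noteq> v \<longrightarrow> c {u, v} \<in> {1, 2})"

definition embedding_in_color ::
    "graph \<Rightarrow> nat \<Rightarrow> (nat set \<Rightarrow> nat) \<Rightarrow> nat \<Rightarrow> (nat \<Rightarrow> nat) \<Rightarrow> bool" where
  "embedding_in_color H n c j \<phi> \<longleftrightarrow>
     inj_on \<phi> {0..<graph_order H} \<and> \<phi> ` {0..<graph_order H} \<subseteq> {0..<n} \<and>
     (\<forall>u v. {u, v} \<in> graph_edges H \<longrightarrow> c {\<phi> u, \<phi> v} = j)"

definition cyclic_increasing :: "nat \<Rightarrow> (nat \<Rightarrow> nat) \<Rightarrow> bool" where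
  "cyclic_increasing h \<phi> \<longleftrightarrow>
     (\<exists>t < h. \<forall>i j. i < j \<longrightarrow> j < h \<longrightarrow> \<phi> ((t + i) mod h) < \<phi> ((t + j) mod h))"

definition cyc_arrows :: "nat \<Rightarrow> graph \<Rightarrow> graph \<Rightarrow> bool" where
  "cyc_arrows n H1 H2 \<longleftrightarrow> (\<forall>c. two_coloring n c \<longrightarrow>
     (\<exists>\<phi>. embedding_in_color H1 n c 1 \<phi> \<and> cyclic_increasing (graph_order H1) \<phi>) \<or>
     (\<exists>\<phi>. embedding_in_color H2 n c 2 \<phi> \<and> cyclic_increasing (graph_order H2) \<phi>))"

text \<open>Cyclic Ramsey number, valued in enat (infinite if no such n exists).\<close>
definition R_cyc :: "graph \<Rightarrow> graph \<Rightarrow> enat" where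
  "R_cyc H1 H2 = Inf {enat n | n. cyc_arrows n H1 H2}"

text \<open>Monotone cycle; C_2 is K_2 by convention.\<close>
definition C_mon :: "nat \<Rightarrow> graph" where
  "C_mon n = (if n = 2 then (2, {{0, 1}})
              else (n, {{i, i + 1} | i. i + 1 < n} \<union> {{0, n - 1}}))"

end

theory Submission
  imports Defs
begin

text \<open>Split \<open>{0..<(a - 1) * (b - 1)}\<close> into \<open>b - 1\<close> consecutive blocks of \<open>a - 1\<close> vertices,
  and colour an edge 1 inside a block and 2 between blocks. A connected graph embedded in
  colour 1 stays inside one block, so it has at most \<open>a - 1\<close> vertices. A cyclically increasing
  monotone cycle in colour 2 visits its \<open>b\<close> vertices in increasing order with consecutive ones
  in different blocks, so it needs \<open>b\<close> blocks. Hence \<open>K\<^sub>n\<close> with \<open>n = (a - 1) * (b - 1)\<close> does not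
  arrow \<open>(H, C\<^sub>b)\<close>.\<close>

definition block_coloring :: "nat \<Rightarrow> nat set \<Rightarrow> nat" where
  "block_coloring m e = (if \<exists>u v. e = {u, v} \<and> u div m = v div m then 1 else 2)"

lemma block_coloring_eq_1_iff: "block_coloring m {u, v} = 1 \<longleftrightarrow> u div m = v div m"
  unfolding block_coloring_def by (auto simp: doubleton_eq_iff)

lemma two_coloring_block_coloring: "two_coloring n (block_coloring m)"
  unfolding two_coloring_def block_coloring_def by auto

lemma graph_order_C_mon [simp]: "graph_order (C_mon b) = b"
  unfolding C_mon_def graph_order_def by auto

lemma C_mon_edge:
  assumes "b \<ge> 2" "i < b"
  shows "{i, Suc i mod b} \<in> graph_edges (C_mon b)"
proof (cases "Suc i < b")
  case True
  then show ?thesis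
    using assms unfolding C_mon_def graph_edges_def by (auto intro!: exI[of _ i])
next
  case False
  then have "Suc i = b"
    using assms(2) by simp
  then have "i = b - 1" "Suc i mod b = 0"
    by auto
  moreover have "{0, b - 1} \<in> graph_edges (C_mon b)"
    using assms(1) unfolding C_mon_def graph_edges_def by auto
  ultimately show ?thesis by (simp add: insert_commute)
qed

lemma cyclic_increasing_pos: "cyclic_increasing h \<phi> \<Longrightarrow> 0 < h"
  unfolding cyclic_increasing_def by auto

lemma connected_embedding_same_block:
  assumes "connected_graph H" "embedding_in_color H n (block_coloring m) 1 \<phi>"
    and "u < graph_order H" "v < graph_order H"
  shows "\<phi> u div m = \<phi> v div m"
proof -
  have "(\<lambda>x y. {x, y} \<in> graph_edges H)\<^sup>*\<^sup>* u v"
    using assms(1,3,4) unfolding connected_graph_def by blast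
  then show ?thesis
  proof (induction rule: rtranclp_induct)
    case (step y z)
    have "block_coloring m {\<phi> y, \<phi> z} = 1"
      using assms(2) step.hyps(2) unfolding embedding_in_color_def by blast
    then show ?case
      using step.IH block_coloring_eq_1_iff by simp
  qed simp
qed

lemma connected_embedding_block_coloring_order_le:
  assumes "connected_graph H" "embedding_in_color H n (block_coloring m) 1 \<phi>" "0 < m"
  shows "graph_order H \<le> m"
proof -
  let ?V = "{0..<graph_order H}"
  have inj: "inj_on \<phi> ?V"
    using assms(2) unfolding embedding_in_color_def by blast
  have "inj_on (\<lambda>v. \<phi> v mod m) ?V"
  proof (rule inj_onI)
    fix u v assume uv: "u \<in> ?V" "v \<in> ?V" and "\<phi> u mod m = \<phi> v mod m"
    moreover have "\<phi> u div m = \<phi> v div m"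
      using connected_embedding_same_block[OF assms(1,2), of u v] uv by simp
    ultimately have "\<phi> u = \<phi> v"
      using div_mult_mod_eq[of "\<phi> u" m] div_mult_mod_eq[of "\<phi> v" m] by metis
    with inj uv show "u = v"
      by (simp add: inj_on_eq_iff)
  qed
  moreover have "(\<lambda>v. \<phi> v mod m) ` ?V \<subseteq> {0..<m}"
    using assms(3) by auto
  ultimately have "card ?V \<le> card {0..<m}"
    by (rule card_inj_on_le) simp
  then show ?thesis
    by simp
qed

lemma C_mon_embedding_block_coloring_bound:
  assumes "b \<ge> 2" "embedding_in_color (C_mon b) n (block_coloring m) 2 \<phi>"
    and "cyclic_increasing b \<phi>"
  shows "(b - 1) * m < n"
proof -
  obtain t where inc: "\<And>i j. i < j \<Longrightarrow> j < b \<Longrightarrow> \<phi> ((t + i) mod b) < \<phi> ((t + j) mod b)"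
    using assms(3) unfolding cyclic_increasing_def by auto
  define x where "x j = \<phi> ((t + j) mod b)" for j
  have block_step: "x j div m < x (Suc j) div m" if "Suc j < b" for j
  proof -
    have "{(t + j) mod b, Suc ((t + j) mod b) mod b} \<in> graph_edges (C_mon b)"
      using C_mon_edge assms(1) by simp
    then have "block_coloring m {x j, x (Suc j)} = 2"
      using assms(2) unfolding embedding_in_color_def x_def by (simp add: mod_Suc_eq)
    then have "x j div m \<noteq> x (Suc j) div m"
      using block_coloring_eq_1_iff by force
    moreover have "x j \<le> x (Suc j)"
      using inc[of j "Suc j"] that unfolding x_def by simp
    ultimately show ?thesis
      using div_le_mono le_neq_implies_less by blast
  qed
  have "j \<le> x j div m" if "j < b" for j
    using that by (induction j) (auto dest: block_step)
  then have "(b - 1) * m \<le> x (b - 1) div m * m"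
    using assms(1) by simp
  also have "\<dots> \<le> x (b - 1)"
    by simp
  also have "\<dots> < n"
  proof -
    have "(t + (b - 1)) mod b \<in> {0..<b}" and "\<phi> ` {0..<b} \<subseteq> {0..<n}"
      using assms(1,2) unfolding embedding_in_color_def by auto
    then have "x (b - 1) \<in> {0..<n}"
      unfolding x_def by blast
    then show ?thesis
      by simp
  qed
  finally show ?thesis by simp
qed

lemma not_cyc_arrows_below_bound:
  assumes "connected_graph H" "graph_order H = a" "b \<ge> 2" "n \<le> (a - 1) * (b - 1)"
  shows "\<not> cyc_arrows n H (C_mon b)"
proof
  let ?c = "block_coloring (a - 1)"
  assume "cyc_arrows n H (C_mon b)"
  then consider (red) \<phi> where "embedding_in_color H n ?c 1 \<phi>" "cyclic_increasing a \<phi>"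
    | (blue) \<phi> where "embedding_in_color (C_mon b) n ?c 2 \<phi>" "cyclic_increasing b \<phi>"
    using two_coloring_block_coloring assms(2) unfolding cyc_arrows_def by fastforce
  then show False
  proof cases
    case (red \<phi>)
    have "0 < a"
      using cyclic_increasing_pos[OF red(2)] .
    then have "\<phi> 0 < n"
      using red(1) assms(2) unfolding embedding_in_color_def by (auto simp: image_subset_iff)
    then have "0 < a - 1"
      using assms(4) by (cases "a - 1") auto
    then show False
      using connected_embedding_block_coloring_order_le[OF assms(1) red(1)] assms(2) by simp
  next
    case (blue \<phi>)
    show False
      using C_mon_embedding_block_coloring_bound[OF assms(3) blue] assms(4)
      by (simp add: mult.commute)
  qed
qed

theorem theorem4p6:
  fixes H :: graph and a b :: nat
  assumes "connected_graph H" and "graph_order H = a" and "b \<ge> 2"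
  shows "R_cyc H (C_mon b) \<ge> enat (1 + (a - 1) * (b - 1))"
  unfolding R_cyc_def
proof (rule Inf_greatest, clarify)
  fix n assume "cyc_arrows n H (C_mon b)"
  then have "\<not> n \<le> (a - 1) * (b - 1)"
    using not_cyc_arrows_below_bound[OF assms] by blast
  then show "enat (1 + (a - 1) * (b - 1)) \<le> enat n" by simp
qed

end
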